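(* Let $\mathcal{X}=\sum_{i=1}^n\mathcal{Y}_i$ where $\mathcal{Y}_1,\dots,\mathcal{Y}_n$ are i.i.d. random tensors in $\mathbb{R}^{d_1\times\cdots\times d_k}$. Assume there are reals $a\le b$ such that, almost surely, $a\le\mathcal{Y}_i(\mathbf{u}_1,\dots,\mathbf{u}_k)\le b$ for every $i$ and all unit vectors $\mathbf{u}_1\in\mathbb{R}^{d_1},\dots,\mathbf{u}_k\in\mathbb{R}^{d_k}$, and let $\sigma:=b-a$. Then for every $t>0$, $$P\left(\|\mathcal{X}-\mathbb{E}\mathcal{X}\|\ge t\right)\le k_0^{\sum_{i=1}^k d_i}\cdot 2\exp\left(-\frac{t^2}{2n\sigma^2}\right),\qquad k_0=\frac{2k}{\log(3/2)}.$$
   Context: For a tensor $\mathcal{Z}\in\mathbb{R}^{d_1\times\cdots\times d_k}$ and vectors $\mathbf{u}_i\in\mathbb{R}^{d_i}$, $\mathcal{Z}(\mathbf{u}_1,\dots,\mathbf{u}_k)=\sum_{j_1,\dots,j_k}\mathcal{Z}_{j_1\dots j_k}(\mathbf{u}_1)_{j_1}\cdots(\mathbf{u}_k)_{j_k}$. The spectral norm is $\|\mathcal{Z}\|=\sup_{\|\mathbf{u}_1\|=\dots=\|\mathbf{u}_k\|=1}\mathcal{Z}(\mathbf{u}_1,\dots,\mathbf{u}_k)$ (Euclidean norms). *)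

theory Defs
  imports "HOL-Probability.Probability"
begin

text \<open>An order-k tensor with dimensions d 0, ..., d (k-1) is represented as a
function from multi-indices (nat \<Rightarrow> nat) to reals; only the multi-indices in
tidx k d are relevant.  A k-tuple of vectors is u :: nat \<Rightarrow> nat \<Rightarrow> real, where
u i is the i-th vector with coordinates u i 0, ..., u i (d i - 1).\<close>

type_synonym tensor = "(nat \<Rightarrow> nat) \<Rightarrow> real"

definition tidx :: "nat \<Rightarrow> (nat \<Rightarrow> nat) \<Rightarrow> (nat \<Rightarrow> nat) set" where
  "tidx k d = PiE {..<k} (\<lambda>i. {..<d i})"

definition tapply :: "nat \<Rightarrow> (nat \<Rightarrow> nat) \<Rightarrow> tensor \<Rightarrow> (nat \<Rightarrow> nat \<Rightarrow> real) \<Rightarrow> real" where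
  "tapply k d Z u = (\<Sum>j\<in>tidx k d. Z j * (\<Prod>i<k. u i (j i)))"

definition unit_tuple :: "nat \<Rightarrow> (nat \<Rightarrow> nat) \<Rightarrow> (nat \<Rightarrow> nat \<Rightarrow> real) \<Rightarrow> bool" where
  "unit_tuple k d u \<longleftrightarrow> (\<forall>i<k. sqrt (\<Sum>j<d i. (u i j)\<^sup>2) = 1)"

definition tnorm :: "nat \<Rightarrow> (nat \<Rightarrow> nat) \<Rightarrow> tensor \<Rightarrow> real" where
  "tnorm k d Z = (SUP u\<in>{u. unit_tuple k d u}. tapply k d Z u)"

definition texp :: "'a measure \<Rightarrow> ('a \<Rightarrow> tensor) \<Rightarrow> tensor" where
  "texp M X = (\<lambda>j. integral\<^sup>L M (\<lambda>\<omega>. X \<omega> j))"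

definition tspace :: "nat \<Rightarrow> (nat \<Rightarrow> nat) \<Rightarrow> tensor measure" where
  "tspace k d = PiM (tidx k d) (\<lambda>_. borel)"

end

theory Submission
  imports Defs
begin

text \<open>An \<epsilon>-net argument. A maximal \<epsilon>-separated subset of the unit sphere of R^d is an
  \<epsilon>-net with at most (1 + 2/\<epsilon>)^d points, by comparing volumes. With nets of mesh 1/(2k) in the
  first k - 1 slots and 2/(k+2) in the last one, every tensor Z satisfies
  \<parallel>Z\<parallel> \<le> 2 max Z(v_1, ..., v_k) over the product net, which has at most k0^(d_1 + ... + d_k)
  elements. For a fixed tuple of unit vectors, (X - E X)(v_1, ..., v_k) is a sum of n independent
  variables with ranges of length \<sigma>, so Hoeffding's inequality bounds the probability that it
  exceeds its mean by t/2 by exp(-t^2/(2n\<sigma>^2)); a union bound over the net concludes.\<close>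

section \<open>Nets on Euclidean spheres\<close>

abbreviation lborel_PiM :: "nat \<Rightarrow> (nat \<Rightarrow> real) measure" where
  "lborel_PiM d \<equiv> PiM {..<d} (\<lambda>_. lborel)"

definition ball_L2 :: "nat \<Rightarrow> (nat \<Rightarrow> real) \<Rightarrow> real \<Rightarrow> (nat \<Rightarrow> real) set" where
  "ball_L2 d c r = {x \<in> space (lborel_PiM d). L2_set (\<lambda>i. x i - c i) {..<d} < r}"

lemma sets_ball_L2 [measurable]: "ball_L2 d c r \<in> sets (lborel_PiM d)"
  unfolding ball_L2_def L2_set_def by measurable

lemma L2_set_diff_commute: "L2_set (\<lambda>i. x i - y i) A = L2_set (\<lambda>i. y i - x i) A"
  unfolding L2_set_def by (simp add: power2_commute)

lemma L2_set_diff_triangle: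
  "L2_set (\<lambda>i. x i - z i) A \<le> L2_set (\<lambda>i. x i - y i) A + L2_set (\<lambda>i. y i - z i) A"
  using L2_set_triangle_ineq[of "\<lambda>i. x i - y i" "\<lambda>i. y i - z i" A] by simp

lemma abs_le_L2_set: "finite A \<Longrightarrow> i \<in> A \<Longrightarrow> \<bar>x i\<bar> \<le> L2_set x A"
  using member_le_L2_set[of A i "\<lambda>i. \<bar>x i\<bar>"] unfolding L2_set_def by simp

lemma power2_L2_set: "(L2_set x A)\<^sup>2 = (\<Sum>l\<in>A. (x l)\<^sup>2)"
  unfolding L2_set_def by (simp add: sum_nonneg)

lemma product_sigma_finite_lborel: "product_sigma_finite (\<lambda>_::nat. lborel::real measure)"
  by (simp add: product_sigma_finite_def sigma_finite_lborel)

lemma emeasure_lborel_affine_vimage: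
  fixes r c :: real assumes "r > 0" "A \<in> sets borel"
  shows "emeasure lborel A = ennreal r * emeasure lborel {x. c + r * x \<in> A}"
proof -
  have "emeasure lborel A
      = emeasure (density (distr lborel borel (\<lambda>x. c + r * x)) (\<lambda>_. ennreal \<bar>r\<bar>)) A"
    using lborel_real_affine[of r c] assms by simp
  then show ?thesis
    using assms by (simp add: emeasure_density emeasure_distr nn_integral_cmult_indicator vimage_def)
qed

lemma lborel_PiM_affine:
  fixes r :: real and c :: "nat \<Rightarrow> real" and d :: nat
  assumes r: "r > 0"
  defines "T \<equiv> \<lambda>x. restrict (\<lambda>i. c i + r * x i) {..<d}"
  shows "density (distr (lborel_PiM d) (lborel_PiM d) T) (\<lambda>_. ennreal (r ^ d)) = lborel_PiM d"
proof (rule product_sigma_finite.PiM_eqI[OF product_sigma_finite_lborel])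
  have [measurable]: "T \<in> measurable (lborel_PiM d) (lborel_PiM d)"
    unfolding T_def by measurable
  fix A :: "nat \<Rightarrow> real set" assume A: "\<And>i. i \<in> {..<d} \<Longrightarrow> A i \<in> sets lborel"
  have "Pi\<^sub>E {..<d} A \<in> sets (lborel_PiM d)"
    using A by (intro sets_PiM_I_finite) auto
  moreover have "T -` Pi\<^sub>E {..<d} A \<inter> space (lborel_PiM d)
      = Pi\<^sub>E {..<d} (\<lambda>i. {x. c i + r * x \<in> A i})"
    unfolding T_def by (auto simp: space_PiM PiE_def Pi_def extensional_def)
  moreover have "{x. c i + r * x \<in> A i} \<in> sets lborel" if "i < d" for i
    using A[of i] that measurable_sets_borel[of "\<lambda>x. c i + r * x" borel "A i"]
    by (simp add: vimage_def)
  ultimately have "emeasure (density (distr (lborel_PiM d) (lborel_PiM d) T) (\<lambda>_. ennreal (r ^ d)))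
      (Pi\<^sub>E {..<d} A)
      = ennreal (r ^ d) * (\<Prod>i<d. emeasure lborel {x. c i + r * x \<in> A i})"
    by (simp add: emeasure_density emeasure_distr nn_integral_cmult_indicator,
        subst product_sigma_finite.emeasure_PiM[OF product_sigma_finite_lborel]) auto
  also have "\<dots> = (\<Prod>i<d. ennreal r * emeasure lborel {x. c i + r * x \<in> A i})"
    using r by (simp add: prod.distrib ennreal_power)
  also have "\<dots> = (\<Prod>i<d. emeasure lborel (A i))"
    using A r by (intro prod.cong refl emeasure_lborel_affine_vimage[symmetric]) auto
  finally show "emeasure (density (distr (lborel_PiM d) (lborel_PiM d) T) (\<lambda>_. ennreal (r ^ d)))
      (Pi\<^sub>E {..<d} A) = (\<Prod>i\<in>{..<d}. emeasure lborel (A i))" by simp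
qed simp_all

lemma emeasure_ball_L2:
  fixes r :: real assumes r: "r > 0"
  shows "emeasure (lborel_PiM d) (ball_L2 d c r)
       = ennreal (r ^ d) * emeasure (lborel_PiM d) (ball_L2 d (\<lambda>_. 0) 1)"
proof -
  define T where "T \<equiv> \<lambda>x. restrict (\<lambda>i. c i + r * x i) {..<d}"
  have [measurable]: "T \<in> measurable (lborel_PiM d) (lborel_PiM d)"
    unfolding T_def by measurable
  have "L2_set (\<lambda>i. T x i - c i) {..<d} = L2_set (\<lambda>i. r * x i) {..<d}" for x
    by (rule L2_set_cong) (auto simp: T_def)
  then have "L2_set (\<lambda>i. T x i - c i) {..<d} = r * L2_set x {..<d}" for x
    using r by (simp add: L2_set_right_distrib)
  then have "T -` ball_L2 d c r \<inter> space (lborel_PiM d) = ball_L2 d (\<lambda>_. 0) 1"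
    using r unfolding ball_L2_def by (auto simp: T_def space_PiM PiE_def Pi_def extensional_def)
  moreover have "emeasure (lborel_PiM d) (ball_L2 d c r)
      = emeasure (density (distr (lborel_PiM d) (lborel_PiM d) T) (\<lambda>_. ennreal (r ^ d))) (ball_L2 d c r)"
    using lborel_PiM_affine[OF r, where c=c and d=d] unfolding T_def by simp
  ultimately show ?thesis
    by (simp add: emeasure_density emeasure_distr nn_integral_cmult_indicator)
qed

lemma emeasure_unit_ball_L2_pos: "0 < emeasure (lborel_PiM d) (ball_L2 d (\<lambda>_. 0) 1)"
proof -
  define B where "B = Pi\<^sub>E {..<d} (\<lambda>_. {-1/(real d+1)<..<1/(real d+1)})"
  have "B \<subseteq> ball_L2 d (\<lambda>_. 0) 1"
  proof
    fix x assume x: "x \<in> B"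
    have "L2_set x {..<d} \<le> (\<Sum>i<d. \<bar>x i\<bar>)" by (rule L2_set_le_sum_abs)
    also have "\<dots> \<le> (\<Sum>i<d. 1/(real d+1))"
      using x by (intro sum_mono) (auto simp: B_def PiE_def Pi_def abs_less_iff less_imp_le)
    also have "\<dots> < 1" by (simp add: field_simps)
    finally show "x \<in> ball_L2 d (\<lambda>_. 0) 1" using x by (auto simp: ball_L2_def B_def space_PiM PiE_def)
  qed
  moreover have "emeasure (lborel_PiM d) B
      = (\<Prod>i<d. emeasure lborel {-1/(real d+1)<..<1/(real d+1)})"
    unfolding B_def by (subst product_sigma_finite.emeasure_PiM[OF product_sigma_finite_lborel]) auto
  moreover have "\<dots> > 0"
    by (simp, subst ennreal_power) auto
  ultimately show ?thesis
    by (metis sets_ball_L2 emeasure_mono order_less_le_trans)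
qed

lemma emeasure_unit_ball_L2_finite: "emeasure (lborel_PiM d) (ball_L2 d (\<lambda>_. 0) 1) < \<infinity>"
proof -
  define B where "B = Pi\<^sub>E {..<d} (\<lambda>_. {-1..1::real})"
  have "\<bar>x i\<bar> \<le> 1" if "x \<in> ball_L2 d (\<lambda>_. 0) 1" "i < d" for x i
    using abs_le_L2_set[of "{..<d}" i x] that by (simp add: ball_L2_def)
  then have "ball_L2 d (\<lambda>_. 0) 1 \<subseteq> B"
    by (auto simp: ball_L2_def B_def space_PiM PiE_def Pi_def abs_le_iff)
  moreover have "B \<in> sets (lborel_PiM d)"
    unfolding B_def by (intro sets_PiM_I_finite) auto
  moreover have "emeasure (lborel_PiM d) B = (\<Prod>i<d. emeasure lborel {-1..1::real})"
    unfolding B_def by (subst product_sigma_finite.emeasure_PiM[OF product_sigma_finite_lborel]) auto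
  moreover have "\<dots> < \<infinity>"
    by (simp add: power_less_top_ennreal)
  ultimately show ?thesis
    by (metis emeasure_mono order_le_less_trans)
qed

definition separated_L2 :: "nat \<Rightarrow> real \<Rightarrow> (nat \<Rightarrow> real) set \<Rightarrow> bool" where
  "separated_L2 d e S \<longleftrightarrow> (\<forall>x\<in>S. \<forall>y\<in>S. x \<noteq> y \<longrightarrow> e < L2_set (\<lambda>i. x i - y i) {..<d})"

text \<open>The volume argument: the balls of radius e/2 around the points of S are disjoint
  and lie in the ball of radius 1 + e/2.\<close>
lemma card_separated_L2_le:
  fixes e :: real
  assumes e: "e > 0" and S: "finite S" "S \<subseteq> space (lborel_PiM d)" "separated_L2 d e S"
    and norm: "\<And>x. x \<in> S \<Longrightarrow> L2_set x {..<d} \<le> 1"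
  shows "real (card S) \<le> (1 + 2/e) ^ d"
proof -
  obtain v where v: "emeasure (lborel_PiM d) (ball_L2 d (\<lambda>_. 0) 1) = ennreal v" "v > 0"
    using emeasure_unit_ball_L2_pos[of d] emeasure_unit_ball_L2_finite[of d]
    by (cases "emeasure (lborel_PiM d) (ball_L2 d (\<lambda>_. 0) 1)") auto
  have ball: "emeasure (lborel_PiM d) (ball_L2 d c r) = ennreal (r^d * v)" if "r > 0" for c r
    using emeasure_ball_L2[OF that, of d c] v that by (simp add: ennreal_mult)
  have "disjoint_family_on (\<lambda>s. ball_L2 d s (e/2)) S"
    unfolding disjoint_family_on_def
  proof (intro ballI impI equalityI subsetI)
    fix s s' x assume s: "s \<in> S" "s' \<in> S" "s \<noteq> s'"
      and x: "x \<in> ball_L2 d s (e/2) \<inter> ball_L2 d s' (e/2)"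
    have "L2_set (\<lambda>i. s i - s' i) {..<d}
        \<le> L2_set (\<lambda>i. s i - x i) {..<d} + L2_set (\<lambda>i. x i - s' i) {..<d}"
      by (rule L2_set_diff_triangle)
    also have "\<dots> < e"
      using x by (simp add: ball_L2_def L2_set_diff_commute[of s])
    finally show "x \<in> {}"
      using S(3) s unfolding separated_L2_def by force
  qed simp
  then have "(\<Sum>s\<in>S. emeasure (lborel_PiM d) (ball_L2 d s (e/2)))
      = emeasure (lborel_PiM d) (\<Union>s\<in>S. ball_L2 d s (e/2))"
    using S by (intro sum_emeasure) auto
  also have "\<dots> \<le> emeasure (lborel_PiM d) (ball_L2 d (\<lambda>_. 0) (1 + e/2))"
  proof (intro emeasure_mono subsetI)
    fix x assume "x \<in> (\<Union>s\<in>S. ball_L2 d s (e/2))"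
    then obtain s where "s \<in> S" "x \<in> ball_L2 d s (e/2)" by blast
    then show "x \<in> ball_L2 d (\<lambda>_. 0) (1 + e/2)"
      using L2_set_diff_triangle[of x "\<lambda>_. 0" "{..<d}" s] norm[of s]
      by (auto simp: ball_L2_def)
  qed simp
  finally have "ennreal (real (card S) * ((e/2)^d * v)) \<le> ennreal ((1 + e/2)^d * v)"
    using e v by (simp add: ball ennreal_of_nat_eq_real_of_nat ennreal_mult[symmetric])
  then have "real (card S) * (e/2)^d \<le> (1 + e/2)^d"
    using e v by (subst (asm) ennreal_le_iff) (auto simp: mult.assoc[symmetric])
  then have "real (card S) \<le> (1 + e/2)^d / (e/2)^d"
    using e by (simp add: pos_le_divide_eq)
  also have "\<dots> = ((1 + e/2) / (e/2))^d"
    by (rule power_divide[symmetric])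
  also have "(1 + e/2) / (e/2) = 1 + 2/e"
    using e by (simp add: field_simps)
  finally show ?thesis .
qed

lemma separated_L2_insert:
  assumes "separated_L2 d e S" "\<And>y. y \<in> S \<Longrightarrow> e < L2_set (\<lambda>i. x i - y i) {..<d}"
  shows "separated_L2 d e (insert x S)"
  using assms L2_set_diff_commute[of x _ "{..<d}"] unfolding separated_L2_def by auto

lemma sphere_net_exists:
  fixes e :: real assumes e: "e > 0"
  obtains N where "finite N" "\<And>v. v \<in> N \<Longrightarrow> L2_set v {..<d} = 1"
    "real (card N) \<le> (1 + 2/e) ^ d"
    "\<And>u. L2_set u {..<d} = 1 \<Longrightarrow> \<exists>v\<in>N. L2_set (\<lambda>i. u i - v i) {..<d} \<le> e"
proof -
  define C where "C = {S. finite S \<and> S \<subseteq> space (lborel_PiM d) \<and>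
     (\<forall>x\<in>S. L2_set x {..<d} = 1) \<and> separated_L2 d e S}"
  have card_C: "real (card S) \<le> (1 + 2/e) ^ d" if "S \<in> C" for S
    using card_separated_L2_le[OF e, of S d] that unfolding C_def by auto
  have "\<exists>S. S \<in> C \<and> (\<forall>S'. S' \<in> C \<longrightarrow> card S' \<le> card S)"
  proof (rule Lattices_Big.ex_has_greatest_nat)
    show "{} \<in> C"
      by (auto simp: C_def separated_L2_def)
    show "\<forall>S. S \<in> C \<longrightarrow> card S < nat \<lceil>(1 + 2/e) ^ d\<rceil> + 1"
    proof (intro allI impI)
      fix S assume "S \<in> C"
      then show "card S < nat \<lceil>(1 + 2/e) ^ d\<rceil> + 1"
        using card_C[of S] by linarith
    qed
  qed
  then obtain S where S: "S \<in> C" and max: "\<And>S'. S' \<in> C \<Longrightarrow> card S' \<le> card S"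
    by blast
  have "\<exists>v\<in>S. L2_set (\<lambda>i. u i - v i) {..<d} \<le> e" if u: "L2_set u {..<d} = 1" for u
  proof (rule ccontr)
    assume far: "\<not> ?thesis"
    define u' where "u' = restrict u {..<d}"
    have dist_u': "L2_set (\<lambda>i. u' i - v i) {..<d} = L2_set (\<lambda>i. u i - v i) {..<d}" for v
      by (rule L2_set_cong) (auto simp: u'_def)
    have "L2_set u' {..<d} = 1"
      using u by (subst L2_set_cong[of _ _ _ u]) (auto simp: u'_def)
    then have "insert u' S \<in> C"
      using S far dist_u' by (auto simp: C_def u'_def space_PiM intro!: separated_L2_insert)
    moreover have "u' \<notin> S"
      using far e dist_u'[of u'] by (auto simp: L2_set_def)
    ultimately show False
      using max[of "insert u' S"] S by (auto simp: C_def)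
  qed
  then show ?thesis
    using that[of S] S card_C by (auto simp: C_def)
qed

lemma sphere_nets_exist:
  assumes "\<And>i. e i > 0"
  obtains N where "\<And>i. finite (N i)" "\<And>i v. v \<in> N i \<Longrightarrow> L2_set v {..<d i} = 1"
    "\<And>i. real (card (N i)) \<le> (1 + 2 / e i) ^ d i"
    "\<And>i u. L2_set u {..<d i} = 1 \<Longrightarrow> \<exists>v\<in>N i. L2_set (\<lambda>l. u l - v l) {..<d i} \<le> e i"
proof -
  have "\<exists>Ni. finite Ni \<and> (\<forall>v\<in>Ni. L2_set v {..<d i} = 1) \<and> real (card Ni) \<le> (1 + 2 / e i) ^ d i
     \<and> (\<forall>u. L2_set u {..<d i} = 1 \<longrightarrow> (\<exists>v\<in>Ni. L2_set (\<lambda>l. u l - v l) {..<d i} \<le> e i))" for i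
  proof -
    obtain Ni where "finite Ni" "\<And>v. v \<in> Ni \<Longrightarrow> L2_set v {..<d i} = 1"
      "real (card Ni) \<le> (1 + 2 / e i) ^ d i"
      "\<And>u. L2_set u {..<d i} = 1 \<Longrightarrow> \<exists>v\<in>Ni. L2_set (\<lambda>l. u l - v l) {..<d i} \<le> e i"
      using sphere_net_exists[OF assms, where d="d i"] by blast
    then show ?thesis
      by (intro exI[of _ Ni]) blast
  qed
  then obtain N where "\<And>i. finite (N i)" "\<And>i v. v \<in> N i \<Longrightarrow> L2_set v {..<d i} = 1"
    "\<And>i. real (card (N i)) \<le> (1 + 2 / e i) ^ d i"
    "\<And>i u. L2_set u {..<d i} = 1 \<Longrightarrow> \<exists>v\<in>N i. L2_set (\<lambda>l. u l - v l) {..<d i} \<le> e i"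
    by metis
  then show ?thesis
    by (rule that)
qed

section \<open>Multilinear forms\<close>

lemma finite_tidx [simp]: "finite (tidx k d)"
  unfolding tidx_def by (auto intro!: finite_PiE)

lemma tidx_less: "j \<in> tidx k d \<Longrightarrow> i < k \<Longrightarrow> j i < d i"
  unfolding tidx_def by (auto simp: PiE_def Pi_def)

lemma unit_tuple_iff_L2_set: "unit_tuple k d u \<longleftrightarrow> (\<forall>i<k. L2_set (u i) {..<d i} = 1)"
  unfolding unit_tuple_def L2_set_def ..

lemma tapply_cong:
  assumes "\<And>i l. i < k \<Longrightarrow> l < d i \<Longrightarrow> u i l = w i l"
  shows "tapply k d Z u = tapply k d Z w"
proof -
  have "(\<Prod>i<k. u i (j i)) = (\<Prod>i<k. w i (j i))" if "j \<in> tidx k d" for j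
    using assms tidx_less[OF that] by (intro prod.cong) auto
  then show ?thesis
    unfolding tapply_def by (intro sum.cong) auto
qed

lemma tapply_fun_upd:
  assumes "i < k"
  shows "tapply k d Z (u(i := x))
       = (\<Sum>j\<in>tidx k d. Z j * x (j i) * (\<Prod>i'\<in>{..<k}-{i}. u i' (j i')))"
proof -
  have "(\<Prod>i'<k. (u(i := x)) i' (j i')) = x (j i) * (\<Prod>i'\<in>{..<k}-{i}. u i' (j i'))" for j
    using assms by (subst prod.remove[of _ i]) (auto intro!: prod.cong)
  then show ?thesis
    unfolding tapply_def by (simp add: mult.assoc)
qed

lemma tapply_fun_upd_linear:
  assumes "i < k"
  shows "tapply k d Z (u(i := (\<lambda>l. \<alpha> * x l + \<beta> * y l)))
       = \<alpha> * tapply k d Z (u(i := x)) + \<beta> * tapply k d Z (u(i := y))"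
  using assms by (simp add: tapply_fun_upd sum.distrib sum_distrib_left algebra_simps)

lemma tapply_fun_upd_sum:
  assumes "i < k" "finite A"
  shows "tapply k d Z (u(i := (\<lambda>l. \<Sum>m\<in>A. c m * x m l)))
       = (\<Sum>m\<in>A. c m * tapply k d Z (u(i := x m)))"
  using assms
  by (simp add: tapply_fun_upd sum_distrib_left sum_distrib_right mult_ac sum.swap[of _ A])

lemma tapply_scale: "tapply k d Z (\<lambda>i l. c i * w i l) = (\<Prod>i<k. c i) * tapply k d Z w"
  unfolding tapply_def by (simp add: prod.distrib sum_distrib_left mult_ac)

lemma tapply_eq_0_if_slot_0:
  assumes "i < k" "\<And>l. l < d i \<Longrightarrow> w i l = 0"
  shows "tapply k d Z w = 0"
proof -
  have "(\<Prod>i'<k. w i' (j i')) = 0" if "j \<in> tidx k d" for j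
    using assms tidx_less[OF that assms(1)] by (intro prod_zero) auto
  then show ?thesis
    unfolding tapply_def by (metis (no_types, lifting) mult_zero_right sum.neutral)
qed

lemma abs_tapply_le_sum_abs:
  assumes "unit_tuple k d u"
  shows "\<bar>tapply k d Z u\<bar> \<le> (\<Sum>j\<in>tidx k d. \<bar>Z j\<bar>)"
proof -
  have "\<bar>u i l\<bar> \<le> 1" if "i < k" "l < d i" for i l
    using assms abs_le_L2_set[of "{..<d i}" l "u i"] that unfolding unit_tuple_iff_L2_set by auto
  then have "\<bar>\<Prod>i<k. u i (j i)\<bar> \<le> 1" if "j \<in> tidx k d" for j
    using tidx_less[OF that] unfolding abs_prod by (intro prod_le_1) auto
  then have "\<bar>Z j * (\<Prod>i<k. u i (j i))\<bar> \<le> \<bar>Z j\<bar>" if "j \<in> tidx k d" for j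
    using that by (simp add: abs_mult mult_left_le)
  then have "(\<Sum>j\<in>tidx k d. \<bar>Z j * (\<Prod>i<k. u i (j i))\<bar>) \<le> (\<Sum>j\<in>tidx k d. \<bar>Z j\<bar>)"
    by (rule sum_mono)
  moreover have "\<bar>tapply k d Z u\<bar> \<le> (\<Sum>j\<in>tidx k d. \<bar>Z j * (\<Prod>i<k. u i (j i))\<bar>)"
    unfolding tapply_def by (rule sum_abs)
  ultimately show ?thesis
    by linarith
qed

lemma bdd_above_tapply: "bdd_above ((\<lambda>u. tapply k d Z u) ` {u. unit_tuple k d u})"
  using abs_tapply_le_sum_abs
  by (intro bdd_aboveI[of _ "\<Sum>j\<in>tidx k d. \<bar>Z j\<bar>"]) (fastforce simp: abs_le_iff)

lemma tapply_le_tnorm: "unit_tuple k d u \<Longrightarrow> tapply k d Z u \<le> tnorm k d Z"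
  unfolding tnorm_def by (rule cSUP_upper[OF _ bdd_above_tapply]) auto

lemma abs_tapply_le_tnorm:
  assumes "unit_tuple k d u" "k \<ge> 1"
  shows "\<bar>tapply k d Z u\<bar> \<le> tnorm k d Z"
proof -
  have "unit_tuple k d (u(0 := (\<lambda>l. - u 0 l)))"
    using assms(1) unfolding unit_tuple_def by auto
  then have "tapply k d Z (u(0 := (\<lambda>l. - u 0 l))) \<le> tnorm k d Z"
    by (rule tapply_le_tnorm)
  moreover have "tapply k d Z (u(0 := (\<lambda>l. - u 0 l))) = - tapply k d Z u"
    using tapply_fun_upd_linear[of 0 k d Z u "-1" "u 0" 0] assms(2) by simp
  ultimately show ?thesis
    using tapply_le_tnorm[OF assms(1)] by (simp add: abs_le_iff)
qed

lemma unit_tuple_normalise: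
  assumes "\<And>i. i < k \<Longrightarrow> 0 < L2_set (w i) {..<d i}"
  shows "unit_tuple k d (\<lambda>i l. w i l / L2_set (w i) {..<d i})"
proof -
  have "L2_set (\<lambda>l. (1 / L2_set (w i) {..<d i}) * w i l) {..<d i} = 1" if "i < k" for i
    using assms[OF that] by (subst L2_set_right_distrib[symmetric]) auto
  then show ?thesis
    unfolding unit_tuple_iff_L2_set by simp
qed

lemma abs_tapply_le_tnorm_prod:
  assumes "k \<ge> 1"
  shows "\<bar>tapply k d Z w\<bar> \<le> tnorm k d Z * (\<Prod>i<k. L2_set (w i) {..<d i})"
proof (cases "\<exists>i<k. L2_set (w i) {..<d i} = 0")
  case True
  then obtain i where i: "i < k" "L2_set (w i) {..<d i} = 0" by blast
  then have "tapply k d Z w = 0"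
    by (intro tapply_eq_0_if_slot_0[OF i(1)]) (auto simp: L2_set_eq_0_iff)
  moreover have "(\<Prod>i<k. L2_set (w i) {..<d i}) = 0"
    using i by (intro prod_zero) auto
  ultimately show ?thesis
    by (metis abs_zero mult_zero_right order_refl)
next
  case False
  define c where "c i = L2_set (w i) {..<d i}" for i
  have c_pos: "c i > 0" if "i < k" for i
    using False that L2_set_nonneg[of "w i" "{..<d i}"] unfolding c_def by (metis order_le_less)
  define w' where "w' i l = w i l / c i" for i l
  have "\<bar>tapply k d Z w'\<bar> \<le> tnorm k d Z"
    using unit_tuple_normalise[of k w d] c_pos assms unfolding w'_def c_def
    by (intro abs_tapply_le_tnorm) auto
  have "tapply k d Z w = tapply k d Z (\<lambda>i l. c i * w' i l)"
    using c_pos by (intro tapply_cong) (force simp: w'_def)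
  moreover have "(\<Prod>i<k. c i) \<ge> 0"
    using c_pos by (intro prod_nonneg) (simp add: less_imp_le)
  ultimately have "\<bar>tapply k d Z w\<bar> = (\<Prod>i<k. c i) * \<bar>tapply k d Z w'\<bar>"
    by (simp add: tapply_scale abs_mult)
  also have "\<dots> \<le> (\<Prod>i<k. c i) * tnorm k d Z"
    using \<open>\<bar>tapply k d Z w'\<bar> \<le> tnorm k d Z\<close> c_pos
    by (intro mult_left_mono prod_nonneg) (auto simp: less_imp_le)
  finally show ?thesis
    by (simp add: c_def mult.commute)
qed

section \<open>Reduction of the spectral norm to a finite net\<close>

definition basis_vec :: "nat \<Rightarrow> nat \<Rightarrow> real" where
  "basis_vec l = (\<lambda>m. if m = l then 1 else 0)"

lemma unit_tuple_basis_vec: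
  assumes "\<And>i. i < k \<Longrightarrow> j i < d i"
  shows "unit_tuple k d (\<lambda>i. basis_vec (j i))"
proof -
  have "(\<Sum>l<d i. (basis_vec (j i) l)\<^sup>2) = 1" if "i < k" for i
    using assms[OF that] by (simp add: basis_vec_def if_distrib[of "\<lambda>x. x\<^sup>2"] cong: if_cong)
  then show ?thesis
    unfolding unit_tuple_def by simp
qed

definition tcontract :: "nat \<Rightarrow> (nat \<Rightarrow> nat) \<Rightarrow> tensor \<Rightarrow> (nat \<Rightarrow> nat \<Rightarrow> real) \<Rightarrow> nat \<Rightarrow> real" where
  "tcontract k d Z w = (\<lambda>l. tapply k d Z (w(k-1 := basis_vec l)))"

lemma tcontract_fun_upd_last [simp]:
  "tcontract k d Z (w(k-1 := x)) = tcontract k d Z w"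
  "tcontract k d Z (w(k - Suc 0 := x)) = tcontract k d Z w"
  unfolding tcontract_def by simp_all

lemma tapply_eq_sum_tcontract:
  assumes "k \<ge> 1"
  shows "tapply k d Z w = (\<Sum>l<d (k-1). w (k-1) l * tcontract k d Z w l)"
proof -
  have "tapply k d Z w
      = tapply k d Z (w(k-1 := (\<lambda>l'. \<Sum>m<d (k-1). w (k-1) m * basis_vec m l')))"
  proof (intro tapply_cong)
    fix i l assume "i < k" "l < d i"
    then show "w i l = (w(k-1 := (\<lambda>l'. \<Sum>m<d (k-1). w (k-1) m * basis_vec m l'))) i l"
      by (cases "i = k-1") (auto simp: basis_vec_def if_distrib cong: if_cong)
  qed
  also have "\<dots> = (\<Sum>m<d (k-1). w (k-1) m * tapply k d Z (w(k-1 := basis_vec m)))"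
    using assms by (intro tapply_fun_upd_sum) auto
  finally show ?thesis
    unfolding tcontract_def by simp
qed

lemma tapply_le_L2_tcontract:
  assumes "k \<ge> 1"
  shows "tapply k d Z w \<le> L2_set (w (k-1)) {..<d (k-1)} * L2_set (tcontract k d Z w) {..<d (k-1)}"
proof -
  have "tapply k d Z w \<le> (\<Sum>l<d (k-1). \<bar>w (k-1) l\<bar> * \<bar>tcontract k d Z w l\<bar>)"
    unfolding tapply_eq_sum_tcontract[OF assms] by (intro sum_mono) (metis abs_ge_self abs_mult)
  also have "\<dots> \<le> L2_set (w (k-1)) {..<d (k-1)} * L2_set (tcontract k d Z w) {..<d (k-1)}"
    by (rule L2_set_mult_ineq)
  finally show ?thesis .
qed

text \<open>Fill the last slot with the contraction g itself:
  \<parallel>g\<parallel>^2 = Z(w_1, ..., w_(k-1), g) \<le> \<parallel>Z\<parallel> \<parallel>w_1\<parallel> ... \<parallel>w_(k-1)\<parallel> \<parallel>g\<parallel>.\<close>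
lemma L2_tcontract_le:
  assumes k: "k \<ge> 1" and M: "0 \<le> tnorm k d Z"
  shows "L2_set (tcontract k d Z w) {..<d (k-1)} \<le> tnorm k d Z * (\<Prod>i<k-1. L2_set (w i) {..<d i})"
proof -
  define g where "g = tcontract k d Z w"
  define s where "s = L2_set g {..<d (k-1)}"
  define P where "P = (\<Prod>i<k-1. L2_set (w i) {..<d i})"
  have "P \<ge> 0"
    unfolding P_def by (intro prod_nonneg) auto
  have "s * s = (\<Sum>l<d (k-1). g l * g l)"
    using power2_L2_set[of g] unfolding s_def by (simp add: power2_eq_square)
  also have "\<dots> = tapply k d Z (w(k-1 := g))"
    using tapply_eq_sum_tcontract[OF k, of d Z "w(k-1 := g)"] unfolding g_def by simp
  also have "\<dots> \<le> tnorm k d Z * (\<Prod>i<k. L2_set ((w(k-1 := g)) i) {..<d i})"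
    using abs_tapply_le_tnorm_prod[OF k, of d Z "w(k-1 := g)"] by simp
  also have "(\<Prod>i<k. L2_set ((w(k-1 := g)) i) {..<d i}) = P * s"
  proof -
    have "k = Suc (k-1)" using k by simp
    then have "(\<Prod>i<k. L2_set ((w(k-1 := g)) i) {..<d i})
        = (\<Prod>i<Suc (k-1). L2_set ((w(k-1 := g)) i) {..<d i})"
      by metis
    also have "\<dots> = P * s"
      unfolding P_def s_def by simp
    finally show ?thesis .
  qed
  finally have "s * s \<le> (tnorm k d Z * P) * s"
    by (simp add: mult.assoc)
  moreover have "s \<ge> 0"
    unfolding s_def by simp
  ultimately have "s \<le> tnorm k d Z * P"
    using M \<open>P \<ge> 0\<close> by (cases "s = 0") (auto simp: mult_le_cancel_right)
  then show ?thesis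
    unfolding s_def g_def P_def .
qed

lemma tcontract_fun_upd_diff:
  assumes "m < k - 1"
  shows "tcontract k d Z (w(m := x)) l - tcontract k d Z (w(m := y)) l
       = tcontract k d Z (w(m := (\<lambda>i. x i - y i))) l"
proof -
  have "m < k" "m \<noteq> k - 1"
    using assms by auto
  then show ?thesis
    unfolding tcontract_def
    using tapply_fun_upd_linear[of m k d Z "w(k-1 := basis_vec l)" 1 x "-1" y]
    by (simp add: fun_upd_twist)
qed

lemma prod_le_factor:
  fixes f :: "'a \<Rightarrow> real"
  assumes "finite A" "m \<in> A" "\<And>i. i \<in> A \<Longrightarrow> 0 \<le> f i" "\<And>i. i \<in> A \<Longrightarrow> i \<noteq> m \<Longrightarrow> f i \<le> 1"
  shows "prod f A \<le> f m"
proof -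
  have "prod f A = f m * prod f (A - {m})"
    using assms by (simp add: prod.remove)
  also have "\<dots> \<le> f m * 1"
    using assms by (intro mult_left_mono prod_le_1) auto
  finally show ?thesis by simp
qed

lemma L2_tcontract_fun_upd_diff_le:
  assumes k: "k \<ge> 1" and M: "0 \<le> tnorm k d Z" and m: "m < k - 1"
    and w: "\<And>i. i < k - 1 \<Longrightarrow> i \<noteq> m \<Longrightarrow> L2_set (w i) {..<d i} \<le> 1"
    and xy: "L2_set (\<lambda>l. x l - y l) {..<d m} \<le> e"
  shows "L2_set (\<lambda>l. tcontract k d Z (w(m := x)) l - tcontract k d Z (w(m := y)) l) {..<d (k-1)}
       \<le> e * tnorm k d Z"
proof -
  have "L2_set (\<lambda>l. tcontract k d Z (w(m := x)) l - tcontract k d Z (w(m := y)) l) {..<d (k-1)}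
      = L2_set (tcontract k d Z (w(m := (\<lambda>i. x i - y i)))) {..<d (k-1)}"
    using tcontract_fun_upd_diff[OF m] by simp
  also have "\<dots> \<le> tnorm k d Z * (\<Prod>i<k-1. L2_set ((w(m := (\<lambda>i. x i - y i))) i) {..<d i})"
    by (rule L2_tcontract_le[OF k M])
  also have "\<dots> \<le> tnorm k d Z * e"
    using m w xy by (intro mult_left_mono[OF _ M] order_trans[OF prod_le_factor[of _ m]]) auto
  finally show ?thesis
    by (simp add: mult.commute)
qed

lemma L2_tcontract_replace_le:
  assumes k: "k \<ge> 1" and M: "0 \<le> tnorm k d Z"
    and u: "\<And>i. i < k - 1 \<Longrightarrow> L2_set (u i) {..<d i} \<le> 1"
    and v: "\<And>i. i < k - 1 \<Longrightarrow> L2_set (v i) {..<d i} \<le> 1"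
    and uv: "\<And>i. i < k - 1 \<Longrightarrow> L2_set (\<lambda>l. v i l - u i l) {..<d i} \<le> e"
  shows "m \<le> k - 1 \<Longrightarrow> L2_set (\<lambda>l. tcontract k d Z (\<lambda>i. if i < m then v i else u i) l
           - tcontract k d Z u l) {..<d (k-1)} \<le> real m * e * tnorm k d Z"
proof (induction m)
  case 0
  then show ?case
    by (simp add: L2_set_def)
next
  case (Suc m)
  define H where "H = (\<lambda>i. if i < m then v i else u i)"
  have m: "m < k - 1"
    using Suc.prems by simp
  have "(\<lambda>i. if i < Suc m then v i else u i) = H(m := v m)" "H = H(m := u m)"
    unfolding H_def by (auto simp: fun_eq_iff)
  moreover have "L2_set (\<lambda>l. tcontract k d Z (H(m := v m)) l - tcontract k d Z (H(m := u m)) l)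
      {..<d (k-1)} \<le> e * tnorm k d Z"
    using u v uv m by (intro L2_tcontract_fun_upd_diff_le[OF k M m]) (auto simp: H_def)
  moreover have "L2_set (\<lambda>l. tcontract k d Z H l - tcontract k d Z u l) {..<d (k-1)}
      \<le> real m * e * tnorm k d Z"
    using Suc by (simp add: H_def)
  ultimately show ?case
    using L2_set_diff_triangle[of "tcontract k d Z (H(m := v m))" "tcontract k d Z u" "{..<d (k-1)}"
        "tcontract k d Z H"]
    by (simp add: algebra_simps)
qed

lemma inner_ge_of_L2_dist:
  assumes "L2_set x A = 1" "L2_set w A = 1" "L2_set (\<lambda>l. x l - w l) A \<le> e"
  shows "(\<Sum>l\<in>A. w l * x l) \<ge> 1 - e\<^sup>2 / 2"
proof -
  have "(L2_set (\<lambda>l. x l - w l) A)\<^sup>2 \<le> e\<^sup>2"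
    using assms(3) by (intro power_mono) auto
  moreover have "(L2_set (\<lambda>l. x l - w l) A)\<^sup>2
      = (L2_set x A)\<^sup>2 - 2 * (\<Sum>l\<in>A. w l * x l) + (L2_set w A)\<^sup>2"
    by (simp add: power2_L2_set power2_diff sum.distrib sum_subtractf sum_distrib_left algebra_simps)
  ultimately show ?thesis
    using assms(1,2) by simp
qed

lemma net_inner_ge:
  assumes cover: "\<And>u. L2_set u A = 1 \<Longrightarrow> \<exists>w\<in>N. L2_set (\<lambda>l. u l - w l) A \<le> e"
    and unit: "\<And>w. w \<in> N \<Longrightarrow> L2_set w A = 1"
    and g: "L2_set g A > 0"
  shows "\<exists>w\<in>N. (1 - e\<^sup>2 / 2) * L2_set g A \<le> (\<Sum>l\<in>A. w l * g l)"
proof -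
  define s where "s = L2_set g A"
  have unit_g: "L2_set (\<lambda>l. (1 / s) * g l) A = 1"
    using g by (subst L2_set_right_distrib[symmetric]) (auto simp: s_def)
  then obtain w where w: "w \<in> N" "L2_set (\<lambda>l. (1 / s) * g l - w l) A \<le> e"
    using cover by blast
  then have "1 - e\<^sup>2 / 2 \<le> (\<Sum>l\<in>A. w l * ((1 / s) * g l))"
    using unit_g unit[OF w(1)] by (intro inner_ge_of_L2_dist)
  then have "(1 - e\<^sup>2 / 2) * s \<le> (\<Sum>l\<in>A. w l * ((1 / s) * g l)) * s"
    using g by (simp add: s_def)
  also have "\<dots> = (\<Sum>l\<in>A. w l * g l)"
    using g by (simp add: s_def sum_distrib_right)
  finally show ?thesis
    using w(1) unfolding s_def by blast
qed

lemma exists_net_approx_tcontract: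
  assumes k: "k \<ge> 1" and M: "0 \<le> tnorm k d Z"
    and u: "\<And>i. i < k - 1 \<Longrightarrow> L2_set (u i) {..<d i} = 1"
    and N: "\<And>i v. i < k - 1 \<Longrightarrow> v \<in> N i \<Longrightarrow> L2_set v {..<d i} = 1"
    and cover: "\<And>i x. i < k - 1 \<Longrightarrow> L2_set x {..<d i} = 1 \<Longrightarrow>
                  \<exists>v\<in>N i. L2_set (\<lambda>l. x l - v l) {..<d i} \<le> e"
  obtains v where "\<And>i. i < k - 1 \<Longrightarrow> v i \<in> N i"
    and "L2_set (tcontract k d Z u) {..<d (k-1)}
           \<le> L2_set (tcontract k d Z v) {..<d (k-1)} + real (k - 1) * e * tnorm k d Z"
proof -
  have "\<forall>i. \<exists>v. i < k - 1 \<longrightarrow> v \<in> N i \<and> L2_set (\<lambda>l. u i l - v l) {..<d i} \<le> e"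
    using cover u by metis
  then obtain w where w: "\<And>i. i < k - 1 \<Longrightarrow> w i \<in> N i \<and> L2_set (\<lambda>l. u i l - w i l) {..<d i} \<le> e"
    by metis
  define v where "v = (\<lambda>i. if i < k - 1 then w i else u i)"
  have "L2_set (\<lambda>l. tcontract k d Z v l - tcontract k d Z u l) {..<d (k-1)}
      \<le> real (k - 1) * e * tnorm k d Z"
    unfolding v_def
    using w N u L2_set_diff_commute[of "w _" "u _"]
    by (intro L2_tcontract_replace_le[OF k M]) auto
  moreover have "L2_set (tcontract k d Z u) {..<d (k-1)}
      \<le> L2_set (\<lambda>l. tcontract k d Z v l - tcontract k d Z u l) {..<d (k-1)}
        + L2_set (tcontract k d Z v) {..<d (k-1)}"
    using L2_set_diff_triangle[of "tcontract k d Z u" "\<lambda>_. 0" "{..<d (k-1)}" "tcontract k d Z v"]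
      L2_set_diff_commute[of "tcontract k d Z u" "tcontract k d Z v"] by simp
  ultimately show ?thesis
    using that[of v] w by (fastforce simp: v_def)
qed

lemma half_le_net_constant:
  fixes k :: real assumes "k > 0"
  shows "1/2 \<le> (2*k + 1) / (4*k) * (1 - (2 / (k + 2))\<^sup>2 / 2)"
proof -
  have "0 \<le> k * k" by simp
  then show ?thesis
    using assms by (simp add: field_simps power2_eq_square) (simp add: divide_le_eq algebra_simps)
qed

text \<open>Start from a unit tuple u with Z(u) > (1 - 1/(4k)) \<parallel>Z\<parallel>; replacing its first k - 1 vectors
  by net points moves the contraction by at most (k - 1)/(2k) \<parallel>Z\<parallel>.\<close>
lemma exists_net_tcontract_large:
  assumes k: "k \<ge> 1" and d: "\<And>i. i < k \<Longrightarrow> d i \<ge> 1" and pos: "0 < tnorm k d Z"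
    and N: "\<And>i v. i < k - 1 \<Longrightarrow> v \<in> N i \<Longrightarrow> L2_set v {..<d i} = 1"
    and cover: "\<And>i u. i < k - 1 \<Longrightarrow> L2_set u {..<d i} = 1 \<Longrightarrow>
                  \<exists>v\<in>N i. L2_set (\<lambda>l. u l - v l) {..<d i} \<le> 1 / (2 * real k)"
  obtains v where "\<And>i. i < k - 1 \<Longrightarrow> v i \<in> N i"
    and "(2 * real k + 1) / (4 * real k) * tnorm k d Z < L2_set (tcontract k d Z v) {..<d (k-1)}"
proof -
  define M where "M = tnorm k d Z"
  have "unit_tuple k d (\<lambda>i. basis_vec 0)"
    using d unit_tuple_basis_vec[of k "\<lambda>_. 0" d] by fastforce
  moreover have "M - M / (4 * real k) < M"
    using pos k by (simp add: M_def)
  ultimately obtain u where u: "unit_tuple k d u" "M - M / (4 * real k) < tapply k d Z u"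
    unfolding M_def tnorm_def by (subst (asm) less_cSUP_iff[OF _ bdd_above_tapply]) auto
  then have u_unit: "\<And>i. i < k \<Longrightarrow> L2_set (u i) {..<d i} = 1"
    by (simp add: unit_tuple_iff_L2_set)
  obtain v where v: "\<And>i. i < k - 1 \<Longrightarrow> v i \<in> N i"
    and v_approx: "L2_set (tcontract k d Z u) {..<d (k-1)}
      \<le> L2_set (tcontract k d Z v) {..<d (k-1)} + real (k - 1) * (1 / (2 * real k)) * M"
  proof (rule exists_net_approx_tcontract[OF k _ _ _ cover, where u=u])
    show "0 \<le> tnorm k d Z"
      using pos by simp
  qed (use u_unit N that in \<open>auto simp: M_def\<close>)
  have "tapply k d Z u \<le> L2_set (tcontract k d Z u) {..<d (k-1)}"
    using tapply_le_L2_tcontract[OF k, of d Z u] u_unit k by simp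
  then have "M - M / (4 * real k) - real (k - 1) * (1 / (2 * real k)) * M
      < L2_set (tcontract k d Z v) {..<d (k-1)}"
    using u(2) v_approx by linarith
  also have "M - M / (4 * real k) - real (k - 1) * (1 / (2 * real k)) * M
      = (2 * real k + 1) / (4 * real k) * M"
    using k by (simp add: field_simps of_nat_diff)
  finally show ?thesis
    using that v unfolding M_def by blast
qed

text \<open>The last vector is taken from the net close to the normalised contraction, which keeps the
  factor 1 - \<epsilon>^2/2 with \<epsilon> = 2/(k + 2); this is why a coarser net suffices in the last slot.\<close>
lemma tnorm_le_twice_tapply_net:
  assumes k: "k \<ge> 1" and d: "\<And>i. i < k \<Longrightarrow> d i \<ge> 1" and pos: "0 < tnorm k d Z"
    and N: "\<And>i v. i < k \<Longrightarrow> v \<in> N i \<Longrightarrow> L2_set v {..<d i} = 1"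
    and cover: "\<And>i u. i < k - 1 \<Longrightarrow> L2_set u {..<d i} = 1 \<Longrightarrow>
                  \<exists>v\<in>N i. L2_set (\<lambda>l. u l - v l) {..<d i} \<le> 1 / (2 * real k)"
    and cover_last: "\<And>u. L2_set u {..<d (k-1)} = 1 \<Longrightarrow>
                  \<exists>v\<in>N (k-1). L2_set (\<lambda>l. u l - v l) {..<d (k-1)} \<le> 2 / (real k + 2)"
  shows "\<exists>v\<in>PiE {..<k} N. tnorm k d Z \<le> 2 * tapply k d Z v"
proof -
  define M where "M = tnorm k d Z"
  define c where "c = (2 * real k + 1) / (4 * real k)"
  define q where "q = 1 - (2 / (real k + 2))\<^sup>2 / 2"
  obtain v where v: "\<And>i. i < k - 1 \<Longrightarrow> v i \<in> N i"
    and s: "M * c < L2_set (tcontract k d Z v) {..<d (k-1)}"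
  proof (rule exists_net_tcontract_large[OF k d pos _ cover])
    fix i v assume "i < k - 1" "v \<in> N i"
    then show "L2_set v {..<d i} = 1"
      using N by simp
  next
    fix v assume "\<And>i. i < k - 1 \<Longrightarrow> v i \<in> N i"
      and "(2 * real k + 1) / (4 * real k) * tnorm k d Z < L2_set (tcontract k d Z v) {..<d (k-1)}"
    then show thesis
      using that[of v] unfolding M_def c_def by (simp add: mult.commute)
  qed
  moreover have "0 < M * c"
    using pos k unfolding M_def c_def by simp
  ultimately have "0 < L2_set (tcontract k d Z v) {..<d (k-1)}"
    by linarith
  moreover have "\<And>w. w \<in> N (k-1) \<Longrightarrow> L2_set w {..<d (k-1)} = 1"
    using N k by simp
  ultimately obtain w where w: "w \<in> N (k-1)"
    and w_inner: "q * L2_set (tcontract k d Z v) {..<d (k-1)} \<le> (\<Sum>l<d (k-1). w l * tcontract k d Z v l)"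
    using net_inner_ge[OF cover_last] unfolding q_def by blast
  define fv where "fv = restrict (v(k-1 := w)) {..<k}"
  have "fv \<in> PiE {..<k} N"
    using v w k by (auto simp: fv_def PiE_def Pi_def)
  have "tapply k d Z fv = tapply k d Z (v(k-1 := w))"
    unfolding fv_def by (intro tapply_cong) auto
  then have fv_eq: "tapply k d Z fv = (\<Sum>l<d (k-1). w l * tcontract k d Z v l)"
    using tapply_eq_sum_tcontract[OF k, of d Z "v(k-1 := w)"] by simp
  have "0 \<le> q"
    using k power_le_one[of "2 / (real k + 2)" 2] unfolding q_def by simp
  have "M * (1/2) \<le> M * (c * q)"
    using half_le_net_constant[of "real k"] k pos unfolding c_def q_def M_def
    by (intro mult_left_mono) auto
  also have "\<dots> \<le> L2_set (tcontract k d Z v) {..<d (k-1)} * q"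
    unfolding mult.assoc[symmetric] using s \<open>0 \<le> q\<close> by (intro mult_right_mono) auto
  also have "\<dots> \<le> tapply k d Z fv"
    using w_inner fv_eq by (simp add: mult.commute)
  finally show ?thesis
    using \<open>fv \<in> PiE {..<k} N\<close> unfolding M_def by (auto simp: mult.commute)
qed

lemma ln_three_halves_le: "ln (3/2::real) \<le> 4/9"
proof -
  have "3/2 \<le> 1 + 4/9 + (4/9)\<^sup>2/(2::real)"
    by (simp add: power2_eq_square)
  also have "\<dots> \<le> exp (4/9)"
    by (rule exp_lower_Taylor_quadratic) simp
  finally show ?thesis
    by (metis exp_gt_zero ln_exp ln_le_cancel_iff zero_less_divide_iff zero_less_numeral)
qed

lemma net_bases_le:
  assumes "k \<ge> 1"
  shows "k \<ge> 2 \<Longrightarrow> 1 + 2 / (1 / (2 * real k)) \<le> 2 * real k / ln (3/2)"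
    and "1 + 2 / (2 / (real k + 2)) \<le> 2 * real k / ln (3/2)"
proof -
  have "9/2 * real k \<le> 2 * real k / ln (3/2)"
    using ln_three_halves_le assms by (simp add: field_simps)
  moreover have "1 + 2 / (1 / (2 * real k)) = 1 + 4 * real k"
    and "1 + 2 / (2 / (real k + 2)) = real k + 3"
    by simp_all
  ultimately show "k \<ge> 2 \<Longrightarrow> 1 + 2 / (1 / (2 * real k)) \<le> 2 * real k / ln (3/2)"
    and "1 + 2 / (2 / (real k + 2)) \<le> 2 * real k / ln (3/2)"
    using assms by linarith+
qed

lemma tensor_net_exists:
  assumes k: "k \<ge> 1" and d: "\<And>i. i < k \<Longrightarrow> d i \<ge> 1"
  obtains NT where "finite NT" "\<And>v. v \<in> NT \<Longrightarrow> unit_tuple k d v"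
    and "real (card NT) \<le> (2 * real k / ln (3/2)) ^ (\<Sum>i<k. d i)"
    and "\<And>Z. 0 < tnorm k d Z \<Longrightarrow> \<exists>v\<in>NT. tnorm k d Z \<le> 2 * tapply k d Z v"
proof -
  define k0 where "k0 = 2 * real k / ln (3/2)"
  define eps where "eps i = (if i < k - 1 then 1 / (2 * real k) else 2 / (real k + 2))" for i
  have eps: "eps i > 0" for i
    unfolding eps_def using k by auto
  obtain N where N: "\<And>i. finite (N i)" "\<And>i v. v \<in> N i \<Longrightarrow> L2_set v {..<d i} = 1"
    "\<And>i. real (card (N i)) \<le> (1 + 2 / eps i) ^ d i"
    "\<And>i u. L2_set u {..<d i} = 1 \<Longrightarrow> \<exists>v\<in>N i. L2_set (\<lambda>l. u l - v l) {..<d i} \<le> eps i"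
    using sphere_nets_exist[where e=eps and d=d, OF eps] by blast
  have "1 + 2 / eps i \<le> k0" for i
    using net_bases_le[OF k] unfolding eps_def k0_def by auto
  then have "real (card (N i)) \<le> k0 ^ d i" for i
    using N(3)[of i] eps[of i] by (meson order_trans power_mono less_imp_le zero_le_divide_iff
        add_nonneg_nonneg zero_le_one zero_le_numeral)
  then have card: "real (card (PiE {..<k} N)) \<le> k0 ^ (\<Sum>i<k. d i)"
    by (simp add: card_PiE power_sum, intro prod_mono) auto
  have cover: "\<exists>v\<in>N i. L2_set (\<lambda>l. u l - v l) {..<d i} \<le> 1 / (2 * real k)"
    if "i < k - 1" "L2_set u {..<d i} = 1" for i u
    using N(4)[OF that(2)] that(1) by (simp add: eps_def)
  have cover_last: "\<exists>v\<in>N (k-1). L2_set (\<lambda>l. u l - v l) {..<d (k-1)} \<le> 2 / (real k + 2)"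
    if "L2_set u {..<d (k-1)} = 1" for u
    using N(4)[OF that] by (simp add: eps_def)
  show ?thesis
  proof (rule that[of "PiE {..<k} N"])
    show "finite (PiE {..<k} N)"
      using N(1) by (intro finite_PiE) auto
    show "unit_tuple k d v" if "v \<in> PiE {..<k} N" for v
      using that N(2) unfolding unit_tuple_iff_L2_set by auto
    show "\<exists>v\<in>PiE {..<k} N. tnorm k d Z \<le> 2 * tapply k d Z v" if "0 < tnorm k d Z" for Z
      using tnorm_le_twice_tapply_net[OF k d that N(2) cover cover_last] by blast
  qed (use card in \<open>simp add: k0_def\<close>)
qed

section \<open>Concentration\<close>

lemma tapply_restrict: "tapply k d (restrict Z (tidx k d)) v = tapply k d Z v"
  unfolding tapply_def by (intro sum.cong) auto

lemma tapply_diff: "tapply k d (\<lambda>j. Z j - W j) v = tapply k d Z v - tapply k d W v"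
  unfolding tapply_def by (simp add: left_diff_distrib sum_subtractf)

lemma tapply_sum: "tapply k d (\<lambda>j. \<Sum>i\<in>I. Z i j) v = (\<Sum>i\<in>I. tapply k d (Z i) v)"
  unfolding tapply_def by (simp add: sum_distrib_right sum.swap[of _ "tidx k d"])

lemma tapply_basis_vec:
  assumes "j \<in> tidx k d"
  shows "tapply k d Z (\<lambda>i. basis_vec (j i)) = Z j"
proof -
  have "(\<Prod>i<k. basis_vec (j i) (j' i)) = (if j' = j then 1 else 0)" if "j' \<in> tidx k d" for j'
  proof (cases "j' = j")
    case False
    then obtain i where "j' i \<noteq> j i" by auto
    moreover have "i < k"
    proof (rule ccontr)
      assume "\<not> i < k"
      then show False
        using that assms \<open>j' i \<noteq> j i\<close> unfolding tidx_def by (auto simp: PiE_def extensional_def)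
    qed
    ultimately show ?thesis
      using False by (intro trans[OF prod_zero]) (auto simp: basis_vec_def)
  qed (simp add: basis_vec_def)
  then have "tapply k d Z (\<lambda>i. basis_vec (j i)) = (\<Sum>j'\<in>tidx k d. Z j' * (if j' = j then 1 else 0))"
    unfolding tapply_def by (intro sum.cong) auto
  also have "\<dots> = Z j"
    using assms by (simp add: if_distrib cong: if_cong)
  finally show ?thesis .
qed

lemma borel_measurable_tapply:
  assumes "\<And>j. j \<in> tidx k d \<Longrightarrow> (\<lambda>\<omega>. Z \<omega> j) \<in> borel_measurable M"
  shows "(\<lambda>\<omega>. tapply k d (Z \<omega>) v) \<in> borel_measurable M"
  unfolding tapply_def using assms by measurable

lemma borel_measurable_tensor_entry:
  assumes "(\<lambda>\<omega>. restrict (Y \<omega>) (tidx k d)) \<in> measurable M (tspace k d)" "j \<in> tidx k d"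
  shows "(\<lambda>\<omega>. Y \<omega> j) \<in> borel_measurable M"
proof -
  have "(\<lambda>\<omega>. restrict (Y \<omega>) (tidx k d) j) \<in> borel_measurable M"
    using measurable_comp[OF assms(1)[unfolded tspace_def]
        measurable_component_singleton[OF assms(2), of "\<lambda>_. borel"]]
    by (simp add: comp_def)
  then show ?thesis
    using assms(2) by simp
qed

lemma integrable_tapply:
  assumes "\<And>j. j \<in> tidx k d \<Longrightarrow> integrable M (\<lambda>\<omega>. Z \<omega> j)"
  shows "integrable M (\<lambda>\<omega>. tapply k d (Z \<omega>) v)"
  unfolding tapply_def using assms by (intro Bochner_Integration.integrable_sum) auto

lemma integral_tapply:
  assumes "\<And>j. j \<in> tidx k d \<Longrightarrow> integrable M (\<lambda>\<omega>. Z \<omega> j)"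
  shows "integral\<^sup>L M (\<lambda>\<omega>. tapply k d (Z \<omega>) v) = tapply k d (texp M Z) v"
  unfolding tapply_def texp_def using assms
  by (subst Bochner_Integration.integral_sum) auto

lemma integrable_tensor_entry:
  assumes "prob_space M"
    and meas: "(\<lambda>\<omega>. restrict (Y \<omega>) (tidx k d)) \<in> measurable M (tspace k d)"
    and bnd: "AE \<omega> in M. \<forall>u. unit_tuple k d u \<longrightarrow> a \<le> tapply k d (Y \<omega>) u \<and> tapply k d (Y \<omega>) u \<le> b"
    and j: "j \<in> tidx k d"
  shows "integrable M (\<lambda>\<omega>. Y \<omega> j)"
proof -
  interpret prob_space M by fact
  interpret interval_bounded_random_variable M "\<lambda>\<omega>. Y \<omega> j" a b
  proof unfold_locales
    show "(\<lambda>\<omega>. Y \<omega> j) \<in> borel_measurable M"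
      using borel_measurable_tensor_entry[OF meas j] .
    have unit: "unit_tuple k d (\<lambda>i. basis_vec (j i))"
      using tidx_less[OF j] by (rule unit_tuple_basis_vec)
    show "AE \<omega> in M. Y \<omega> j \<in> {a..b}"
      using bnd
    proof eventually_elim
      case (elim \<omega>)
      then have "a \<le> tapply k d (Y \<omega>) (\<lambda>i. basis_vec (j i)) \<and> tapply k d (Y \<omega>) (\<lambda>i. basis_vec (j i)) \<le> b"
        using unit by blast
      then show ?case
        by (simp add: tapply_basis_vec[OF j])
    qed
  qed
  show ?thesis
    by (rule integrable)
qed

lemma tapply_centered_sum:
  assumes "\<And>i j. i \<in> I \<Longrightarrow> j \<in> tidx k d \<Longrightarrow> integrable M (\<lambda>\<omega>. Y i \<omega> j)"
  defines "X \<equiv> \<lambda>\<omega> j. \<Sum>i\<in>I. Y i \<omega> j"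
  shows "tapply k d (\<lambda>j. X \<omega> j - texp M X j) v
       = (\<Sum>i\<in>I. tapply k d (Y i \<omega>) v) - (\<Sum>i\<in>I. integral\<^sup>L M (\<lambda>\<omega>. tapply k d (Y i \<omega>) v))"
proof -
  have "tapply k d (texp M X) v = integral\<^sup>L M (\<lambda>\<omega>. tapply k d (X \<omega>) v)"
    unfolding X_def using assms(1) by (intro integral_tapply[symmetric]) auto
  also have "\<dots> = (\<Sum>i\<in>I. integral\<^sup>L M (\<lambda>\<omega>. tapply k d (Y i \<omega>) v))"
    unfolding X_def tapply_sum using assms(1)
    by (intro Bochner_Integration.integral_sum integrable_tapply) auto
  finally show ?thesis
    by (simp add: tapply_diff tapply_sum X_def)
qed

lemma prob_tapply_sum_ge:
  fixes Y :: "'i \<Rightarrow> 'a \<Rightarrow> tensor"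
  assumes "prob_space M" "finite I" "I \<noteq> {}" "a < b" "0 \<le> \<epsilon>"
    and indep: "prob_space.indep_vars M (\<lambda>_. tspace k d) (\<lambda>i \<omega>. restrict (Y i \<omega>) (tidx k d)) I"
    and bnd: "\<And>i. i \<in> I \<Longrightarrow> AE \<omega> in M. a \<le> tapply k d (Y i \<omega>) v \<and> tapply k d (Y i \<omega>) v \<le> b"
  shows "measure M {\<omega>\<in>space M. (\<Sum>i\<in>I. integral\<^sup>L M (\<lambda>\<omega>. tapply k d (Y i \<omega>) v)) + \<epsilon>
            \<le> (\<Sum>i\<in>I. tapply k d (Y i \<omega>) v)}
         \<le> exp (- 2 * \<epsilon>\<^sup>2 / (real (card I) * (b - a)\<^sup>2))"
proof -
  interpret prob_space M by fact
  have "(\<lambda>T. tapply k d T v) \<in> borel_measurable (tspace k d)"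
    unfolding tspace_def by (intro borel_measurable_tapply measurable_component_singleton)
  then have "indep_vars (\<lambda>_. borel) (\<lambda>i \<omega>. tapply k d (Y i \<omega>) v) I"
    using indep_vars_compose2[OF indep, of "\<lambda>_ T. tapply k d T v" "\<lambda>_. borel"]
    by (simp add: tapply_restrict)
  then interpret Hoeffding_ineq M I "\<lambda>i \<omega>. tapply k d (Y i \<omega>) v" "\<lambda>_. a" "\<lambda>_. b"
    "\<Sum>i\<in>I. integral\<^sup>L M (\<lambda>\<omega>. tapply k d (Y i \<omega>) v)"
    using assms(2) bnd by unfold_locales auto
  have "(\<Sum>i\<in>I. ((\<lambda>_. b) i - (\<lambda>_. a) i)\<^sup>2) = real (card I) * (b - a)\<^sup>2"
    by simp
  then show ?thesis
    using Hoeffding_ineq_ge[OF assms(5)] assms(2-4) by (simp add: card_gt_0_iff)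
qed

lemma prob_tapply_centered_sum_ge:
  fixes Y :: "nat \<Rightarrow> 'a \<Rightarrow> tensor"
  assumes "prob_space M" "finite I" "I \<noteq> {}" "a < b" "0 \<le> \<epsilon>"
    and meas: "\<forall>i\<in>I. (\<lambda>\<omega>. restrict (Y i \<omega>) (tidx k d)) \<in> measurable M (tspace k d)"
    and indep: "prob_space.indep_vars M (\<lambda>_. tspace k d) (\<lambda>i \<omega>. restrict (Y i \<omega>) (tidx k d)) I"
    and bnd: "AE \<omega> in M. \<forall>i\<in>I. \<forall>u. unit_tuple k d u \<longrightarrow>
                 a \<le> tapply k d (Y i \<omega>) u \<and> tapply k d (Y i \<omega>) u \<le> b"
    and v: "unit_tuple k d v"
  defines "X \<equiv> \<lambda>\<omega> j. \<Sum>i\<in>I. Y i \<omega> j"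
  shows "measure M {\<omega>\<in>space M. \<epsilon> \<le> tapply k d (\<lambda>j. X \<omega> j - texp M X j) v}
         \<le> exp (- 2 * \<epsilon>\<^sup>2 / (real (card I) * (b - a)\<^sup>2))"
proof -
  have bnd_i: "AE \<omega> in M. \<forall>u. unit_tuple k d u \<longrightarrow> a \<le> tapply k d (Y i \<omega>) u \<and> tapply k d (Y i \<omega>) u \<le> b"
    if "i \<in> I" for i
    using bnd that by (auto elim!: AE_mp)
  have int: "integrable M (\<lambda>\<omega>. Y i \<omega> j)" if "i \<in> I" "j \<in> tidx k d" for i j
    using integrable_tensor_entry[OF assms(1) _ bnd_i] meas that by blast
  then have "{\<omega>\<in>space M. \<epsilon> \<le> tapply k d (\<lambda>j. X \<omega> j - texp M X j) v}
      = {\<omega>\<in>space M. (\<Sum>i\<in>I. integral\<^sup>L M (\<lambda>\<omega>. tapply k d (Y i \<omega>) v)) + \<epsilon>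
            \<le> (\<Sum>i\<in>I. tapply k d (Y i \<omega>) v)}"
    unfolding X_def by (auto simp: tapply_centered_sum[OF int])
  also have "measure M \<dots> \<le> exp (- 2 * \<epsilon>\<^sup>2 / (real (card I) * (b - a)\<^sup>2))"
  proof (rule prob_tapply_sum_ge[OF assms(1-5) indep])
    fix i assume "i \<in> I"
    show "AE \<omega> in M. a \<le> tapply k d (Y i \<omega>) v \<and> tapply k d (Y i \<omega>) v \<le> b"
      using bnd_i[OF \<open>i \<in> I\<close>] by (rule eventually_mono) (use v in blast)
  qed
  finally show ?thesis .
qed

lemma (in prob_space) prob_tnorm_ge_le_sum:
  assumes "finite NT" "0 < t"
    and net: "\<And>W. 0 < tnorm k d W \<Longrightarrow> \<exists>v\<in>NT. tnorm k d W \<le> 2 * tapply k d W v"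
    and meas: "\<And>j. j \<in> tidx k d \<Longrightarrow> (\<lambda>\<omega>. Z \<omega> j) \<in> borel_measurable M"
  shows "prob {\<omega>\<in>space M. t \<le> tnorm k d (Z \<omega>)}
       \<le> (\<Sum>v\<in>NT. prob {\<omega>\<in>space M. t/2 \<le> tapply k d (Z \<omega>) v})"
proof -
  have sets: "{\<omega>\<in>space M. t/2 \<le> tapply k d (Z \<omega>) v} \<in> events" for v
    using borel_measurable_tapply[OF meas] by measurable
  have "{\<omega>\<in>space M. t \<le> tnorm k d (Z \<omega>)} \<subseteq> (\<Union>v\<in>NT. {\<omega>\<in>space M. t/2 \<le> tapply k d (Z \<omega>) v})"
  proof
    fix \<omega> assume "\<omega> \<in> {\<omega>\<in>space M. t \<le> tnorm k d (Z \<omega>)}"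
    then have \<omega>: "\<omega> \<in> space M" "t \<le> tnorm k d (Z \<omega>)"
      by auto
    then obtain v where "v \<in> NT" "tnorm k d (Z \<omega>) \<le> 2 * tapply k d (Z \<omega>) v"
      using net \<open>0 < t\<close> by (meson less_le_trans)
    then show "\<omega> \<in> (\<Union>v\<in>NT. {\<omega>\<in>space M. t/2 \<le> tapply k d (Z \<omega>) v})"
      using \<omega> by (intro UN_I[of v]) auto
  qed
  then have "prob {\<omega>\<in>space M. t \<le> tnorm k d (Z \<omega>)}
      \<le> prob (\<Union>v\<in>NT. {\<omega>\<in>space M. t/2 \<le> tapply k d (Z \<omega>) v})"
    using sets \<open>finite NT\<close> by (intro finite_measure_mono) auto
  also have "\<dots> \<le> (\<Sum>v\<in>NT. prob {\<omega>\<in>space M. t/2 \<le> tapply k d (Z \<omega>) v})"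
    using sets \<open>finite NT\<close> by (intro finite_measure_subadditive_finite) auto
  finally show ?thesis .
qed

lemma prob_tnorm_centered_sum_ge:
  fixes Y :: "nat \<Rightarrow> 'a \<Rightarrow> tensor"
  assumes "prob_space M" "k \<ge> 1" "\<And>i. i < k \<Longrightarrow> d i \<ge> 1"
    and I: "finite I" "I \<noteq> {}" and "a < b" "t > 0"
    and meas: "\<forall>i\<in>I. (\<lambda>\<omega>. restrict (Y i \<omega>) (tidx k d)) \<in> measurable M (tspace k d)"
    and indep: "prob_space.indep_vars M (\<lambda>_. tspace k d) (\<lambda>i \<omega>. restrict (Y i \<omega>) (tidx k d)) I"
    and bnd: "AE \<omega> in M. \<forall>i\<in>I. \<forall>u. unit_tuple k d u \<longrightarrow>
                 a \<le> tapply k d (Y i \<omega>) u \<and> tapply k d (Y i \<omega>) u \<le> b"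
  defines "X \<equiv> \<lambda>\<omega> j. \<Sum>i\<in>I. Y i \<omega> j"
  shows "measure M {\<omega>\<in>space M. t \<le> tnorm k d (\<lambda>j. X \<omega> j - texp M X j)}
       \<le> (2 * real k / ln (3/2)) ^ (\<Sum>i<k. d i) * exp (- (t\<^sup>2) / (2 * real (card I) * (b - a)\<^sup>2))"
proof -
  interpret prob_space M by fact
  define bound where "bound = exp (- (t\<^sup>2) / (2 * real (card I) * (b - a)\<^sup>2))"
  obtain NT where NT: "finite NT" "\<And>v. v \<in> NT \<Longrightarrow> unit_tuple k d v"
    "real (card NT) \<le> (2 * real k / ln (3/2)) ^ (\<Sum>i<k. d i)"
    "\<And>Z. 0 < tnorm k d Z \<Longrightarrow> \<exists>v\<in>NT. tnorm k d Z \<le> 2 * tapply k d Z v"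
    using tensor_net_exists[of k d] assms(2,3) by metis
  have "prob {\<omega>\<in>space M. t \<le> tnorm k d (\<lambda>j. X \<omega> j - texp M X j)}
      \<le> (\<Sum>v\<in>NT. prob {\<omega>\<in>space M. t/2 \<le> tapply k d (\<lambda>j. X \<omega> j - texp M X j) v})"
  proof (rule prob_tnorm_ge_le_sum[OF NT(1) \<open>t > 0\<close> NT(4)])
    fix j assume "j \<in> tidx k d"
    then have "(\<lambda>\<omega>. Y i \<omega> j) \<in> borel_measurable M" if "i \<in> I" for i
      using borel_measurable_tensor_entry meas that by blast
    then show "(\<lambda>\<omega>. X \<omega> j - texp M X j) \<in> borel_measurable M"
      unfolding X_def by (intro borel_measurable_diff borel_measurable_sum) auto
  qed
  also have "\<dots> \<le> (\<Sum>v\<in>NT. bound)"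
  proof (intro sum_mono)
    fix v assume "v \<in> NT"
    have "-2 * (t/2)\<^sup>2 / (real (card I) * (b - a)\<^sup>2) = - (t\<^sup>2) / (2 * real (card I) * (b - a)\<^sup>2)"
      by (simp add: power2_eq_square)
    then show "prob {\<omega>\<in>space M. t/2 \<le> tapply k d (\<lambda>j. X \<omega> j - texp M X j) v} \<le> bound"
      using prob_tapply_centered_sum_ge[OF assms(1) I \<open>a < b\<close> _ meas indep bnd
          NT(2)[OF \<open>v \<in> NT\<close>], of "t/2"] \<open>t > 0\<close>
      unfolding X_def bound_def by simp
  qed
  also have "\<dots> \<le> (2 * real k / ln (3/2)) ^ (\<Sum>i<k. d i) * bound"
    using NT(3) by (simp add: bound_def)
  finally show ?thesis
    unfolding bound_def .
qed

theorem theorem3: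
  fixes M :: "'a measure" and k n :: nat and d :: "nat \<Rightarrow> nat"
    and Y :: "nat \<Rightarrow> 'a \<Rightarrow> tensor" and a b t :: real
  assumes "prob_space M"
    and "k \<ge> 1" and "\<forall>i<k. d i \<ge> 1"
    and meas: "\<forall>i\<in>{1..n}. (\<lambda>\<omega>. restrict (Y i \<omega>) (tidx k d)) \<in> measurable M (tspace k d)"
    and indep: "prob_space.indep_vars M (\<lambda>_. tspace k d)
                  (\<lambda>i \<omega>. restrict (Y i \<omega>) (tidx k d)) {1..n}"
    and ident: "\<forall>i\<in>{1..n}. distr M (tspace k d) (\<lambda>\<omega>. restrict (Y i \<omega>) (tidx k d))
                            = distr M (tspace k d) (\<lambda>\<omega>. restrict (Y 1 \<omega>) (tidx k d))"
    and "a \<le> b"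
    and bnd: "AE \<omega> in M. \<forall>i\<in>{1..n}. \<forall>u. unit_tuple k d u \<longrightarrow>
                 a \<le> tapply k d (Y i \<omega>) u \<and> tapply k d (Y i \<omega>) u \<le> b"
    and "t > 0"
  shows "let X = (\<lambda>\<omega> j. \<Sum>i=1..n. Y i \<omega> j);
             EXX = texp M X;
             \<sigma> = b - a;
             k0 = 2 * real k / ln (3/2)
         in measure M {\<omega>\<in>space M. tnorm k d (\<lambda>j. X \<omega> j - EXX j) \<ge> t}
            \<le> k0 ^ (\<Sum>i<k. d i) * 2 * exp (- (t\<^sup>2) / (2 * real n * \<sigma>\<^sup>2))"
proof -
  define k0 where "k0 = 2 * real k / ln (3/2)"
  define bound where "bound = exp (- (t\<^sup>2) / (2 * real n * (b - a)\<^sup>2))"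
  define P where "P = measure M {\<omega>\<in>space M. t \<le> tnorm k d (\<lambda>j. (\<Sum>i=1..n. Y i \<omega> j)
                                      - texp M (\<lambda>\<omega> j. \<Sum>i=1..n. Y i \<omega> j) j)}"
  have "1 \<le> k0"
    using ln_three_halves_le \<open>k \<ge> 1\<close> by (simp add: k0_def field_simps)
  have "P \<le> k0 ^ (\<Sum>i<k. d i) * bound"
  proof (cases "n = 0 \<or> a = b")
    case True
    \<comment> \<open>The exponent then divides by zero.\<close>
    then have "bound = 1"
      by (auto simp: bound_def)
    moreover have "P \<le> 1"
      unfolding P_def using assms(1) by (rule prob_space.prob_le_1)
    ultimately show ?thesis
      using one_le_power[OF \<open>1 \<le> k0\<close>, of "\<Sum>i<k. d i"] by simp
  next
    case False
    then show ?thesis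
      using prob_tnorm_centered_sum_ge[OF assms(1,2) _ _ _ _ \<open>t > 0\<close> meas indep bnd] assms(3) \<open>a \<le> b\<close>
      unfolding P_def k0_def bound_def by force
  qed
  moreover have "0 \<le> k0 ^ (\<Sum>i<k. d i) * bound"
    using \<open>1 \<le> k0\<close> by (simp add: bound_def)
  ultimately have "P \<le> k0 ^ (\<Sum>i<k. d i) * 2 * bound"
    by linarith
  then show ?thesis
    unfolding Let_def P_def k0_def bound_def by simp
qed

end
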